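(* Let $N=\{1,\dots,n\}$ be agents and $M=\{1,\dots,m\}$ chores, where all agents share an identical additive valuation $V$ with $V(\{j\})\le0$ for all $j$ and $V(M)=-1$, and shares $s_i\in(0,1]$ with $\sum_is_i=1$. Let $\langle X_1,\dots,X_n\rangle$ be the output of Algorithm $\mathsf{EgalGreedy}$. Then $V(X_i)\ge 2\,\mathsf{WMMS}_i$ for every $i\in N$.
   Context: Algorithm $\mathsf{EgalGreedy}$: start with $X_i=\emptyset$ for all $i$; order the chores so that $V(\{1\})\le V(\{2\})\le\dots\le V(\{m\})$ (most costly first); for $j=1,\dots,m$ in this order, pick $i^*\in\arg\max_{i\in N}\frac{V(X_i\cup\{j\})}{s_i}$ (ties broken arbitrarily) and set $X_{i^*}\leftarrow X_{i^*}\cup\{j\}$; return $\langle X_1,\dots,X_n\rangle$. The weighted maxmin share is $\mathsf{WMMS}_i:=\max_{\langle Y_1,\dots,Y_n\rangle}\min_{k\in N}V(Y_k)\frac{s_i}{s_k}$, the maximum over all ordered partitions of $M$ into $n$ possibly empty bundles. *)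

theory Defs
  imports Complex_Main "HOL-Library.FuncSet"
begin

definition V :: "(nat \<Rightarrow> real) \<Rightarrow> nat set \<Rightarrow> real" where
  "V v S = (\<Sum>j\<in>S. v j)"

text \<open>Weighted maxmin share of agent i: maximum over all ordered partitions of M into
  n (possibly empty) bundles Y_1..Y_n, represented by the assignment f : M \<rightarrow> N
  with Y_k = {j \<in> M. f j = k}.\<close>

definition WMMS :: "nat \<Rightarrow> nat \<Rightarrow> (nat \<Rightarrow> real) \<Rightarrow> (nat \<Rightarrow> real) \<Rightarrow> nat \<Rightarrow> real" where
  "WMMS n m v s i =
     Max ((\<lambda>f. Min ((\<lambda>k. V v {j \<in> {1..m}. f j = k} * s i / s k) ` {1..n}))
          ` ({1..m} \<rightarrow>\<^sub>E {1..n}))"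

text \<open>Executions of EgalGreedy (chores already sorted, processed in order 1,2,..,m),
  with arbitrary tie-breaking: egal_run n v s j X means that after processing
  chores 1..j a possible state of the allocation is X.\<close>

inductive egal_run :: "nat \<Rightarrow> (nat \<Rightarrow> real) \<Rightarrow> (nat \<Rightarrow> real) \<Rightarrow> nat \<Rightarrow> (nat \<Rightarrow> nat set) \<Rightarrow> bool"
  for n :: nat and v :: "nat \<Rightarrow> real" and s :: "nat \<Rightarrow> real" where
  start: "egal_run n v s 0 (\<lambda>_. {})"
| step: "\<lbrakk> egal_run n v s j X; i \<in> {1..n};
           \<forall>k\<in>{1..n}. V v (X k \<union> {Suc j}) / s k \<le> V v (X i \<union> {Suc j}) / s i \<rbrakk>
         \<Longrightarrow> egal_run n v s (Suc j) (X(i := X i \<union> {Suc j}))"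

end

theory Submission
  imports Defs
begin

text \<open>Fix an optimal partition for agent i and let \<open>\<lambda>\<close> be its smallest normalised bundle value
  \<open>V(Y\<^sub>k)/s\<^sub>k\<close>, so that \<open>WMMS\<^sub>i = \<lambda> s\<^sub>i\<close> and \<open>\<lambda> s\<^sub>k \<le> V(Y\<^sub>k)\<close> for all k. By induction over the run,
  every bundle keeps \<open>2\<lambda> s\<^sub>k \<le> V(X\<^sub>k)\<close>. When chore j+1 arrives, call k eligible if \<open>\<lambda> s\<^sub>k \<le> v(j+1)\<close>;
  since chores come most costly first, the owner in Y of each of the chores 1..j+1 is eligible.
  If every eligible k had \<open>V(X\<^sub>k) < \<lambda> s\<^sub>k\<close>, the eligible agents would hold strictly less than their
  bundles in Y, which together contain 1..j+1 and hence are worth at most \<open>V{1..j+1} \<le> V{1..j}\<close>,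
  the total of the current allocation. So some eligible k has \<open>V(X\<^sub>k) + v(j+1) \<ge> 2\<lambda> s\<^sub>k\<close>, and the
  greedy choice maximises the normalised value after adding the chore.\<close>

abbreviation bundle_of :: "nat \<Rightarrow> (nat \<Rightarrow> nat) \<Rightarrow> nat \<Rightarrow> nat set" where
  "bundle_of m f k \<equiv> {j \<in> {1..m}. f j = k}"

lemma sum_superset_le_nonpos:
  fixes f :: "'a \<Rightarrow> 'b::ordered_comm_monoid_add"
  assumes "finite B" "A \<subseteq> B" "\<forall>b\<in>B - A. f b \<le> 0"
  shows "sum f B \<le> sum f A"
proof -
  have "sum f B = sum f (B - A) + sum f A"
    using assms by (intro sum.subset_diff) auto
  moreover have "sum f (B - A) \<le> 0"
    using assms(3) by (intro sum_nonpos) auto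
  ultimately show ?thesis by (simp add: add_decreasing)
qed

lemma V_nonpos:
  assumes "S \<subseteq> {1..m}" "\<forall>j\<in>{1..m}. v j \<le> 0"
  shows "V v S \<le> 0"
  unfolding V_def using assms by (intro sum_nonpos) auto

lemma V_insert_new:
  assumes "finite S" "a \<notin> S"
  shows "V v (insert a S) = V v S + v a"
  using assms by (simp add: V_def)

lemma egal_run_subset:
  assumes "egal_run n v s t X"
  shows "X k \<subseteq> {1..t}"
  using assms by induction auto

lemma egal_run_sum:
  assumes "egal_run n v s t X"
  shows "(\<Sum>k\<in>{1..n}. V v (X k)) = V v {1..t}"
  using assms
proof induction
  case start
  then show ?case by (simp add: V_def)
next
  case (step j X i)
  have new: "V v (insert (Suc j) (X i)) = V v (X i) + v (Suc j)"
    using egal_run_subset[OF step.hyps(1), of i]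
    by (intro V_insert_new) (auto intro: finite_subset)
  have "(\<Sum>k\<in>{1..n}. V v ((X(i := X i \<union> {Suc j})) k))
        = (\<Sum>k\<in>{1..n}. V v (X k) + (if k = i then v (Suc j) else 0))"
    by (rule sum.cong) (auto simp: new)
  also have "\<dots> = V v {1..j} + v (Suc j)"
    using step.hyps(2) step.IH by (simp add: sum.distrib)
  also have "\<dots> = V v {1..Suc j}"
    by (simp add: V_def)
  finally show ?case .
qed

lemma V_bundles_le_prefix:
  assumes nonpos: "\<forall>j\<in>{1..m}. v j \<le> 0"
    and "finite A" "t \<le> m" "\<forall>j\<in>{1..t}. f j \<in> A"
  shows "(\<Sum>k\<in>A. V v (bundle_of m f k)) \<le> V v {1..t}"
proof -
  let ?S = "{j \<in> {1..m}. f j \<in> A}"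
  have "(\<Sum>k\<in>A. V v (bundle_of m f k)) = (\<Sum>k\<in>A. sum v {j \<in> ?S. f j = k})"
    unfolding V_def by (intro sum.cong) auto
  also have "\<dots> = sum v ?S"
    using \<open>finite A\<close> by (intro sum.group) auto
  also have "\<dots> \<le> sum v {1..t}"
    using assms by (intro sum_superset_le_nonpos) auto
  finally show ?thesis unfolding V_def .
qed

lemma egal_run_exists_slack:
  assumes nonpos: "\<forall>j\<in>{1..m}. v j \<le> 0"
    and sorted: "\<forall>j\<in>{1..m}. \<forall>j'\<in>{1..m}. j \<le> j' \<longrightarrow> v j \<le> v j'"
    and f: "f \<in> {1..m} \<rightarrow>\<^sub>E {1..n}"
    and lam: "\<forall>k\<in>{1..n}. lam * s k \<le> V v (bundle_of m f k)"
    and run: "egal_run n v s j X" and "Suc j \<le> m"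
  shows "\<exists>k\<in>{1..n}. lam * s k \<le> v (Suc j) \<and> lam * s k \<le> V v (X k)"
proof (rule ccontr)
  define A where "A = {k\<in>{1..n}. lam * s k \<le> v (Suc j)}"
  assume "\<not> ?thesis"
  then have below: "\<forall>k\<in>A. V v (X k) < lam * s k"
    unfolding A_def by auto
  have owner_eligible: "f j' \<in> A" if "j' \<in> {1..Suc j}" for j'
  proof -
    have j': "j' \<in> {1..m}" "f j' \<in> {1..n}"
      using that \<open>Suc j \<le> m\<close> f by auto
    have "lam * s (f j') \<le> V v (bundle_of m f (f j'))"
      using lam j' by blast
    also have "\<dots> \<le> V v {j'}"
      unfolding V_def using j' nonpos by (intro sum_superset_le_nonpos) auto
    also have "\<dots> \<le> v (Suc j)"
      using sorted j' that \<open>Suc j \<le> m\<close> by (auto simp: V_def)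
    finally show ?thesis
      using j' unfolding A_def by blast
  qed
  have "A \<noteq> {}"
    using owner_eligible[of "Suc j"] by auto
  have "V v {1..j} = (\<Sum>k\<in>{1..n}. V v (X k))"
    using egal_run_sum[OF run] by simp
  also have "\<dots> \<le> (\<Sum>k\<in>A. V v (X k))"
    using egal_run_subset[OF run] \<open>Suc j \<le> m\<close> nonpos
    by (intro sum_superset_le_nonpos V_nonpos ballI) (auto simp: A_def)
  also have "\<dots> < (\<Sum>k\<in>A. lam * s k)"
    using below \<open>A \<noteq> {}\<close> by (intro sum_strict_mono) (auto simp: A_def)
  also have "\<dots> \<le> (\<Sum>k\<in>A. V v (bundle_of m f k))"
    using lam by (intro sum_mono) (auto simp: A_def)
  also have "\<dots> \<le> V v {1..Suc j}"
    using nonpos owner_eligible \<open>Suc j \<le> m\<close> by (intro V_bundles_le_prefix) (auto simp: A_def)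
  also have "\<dots> \<le> V v {1..j}"
    using nonpos \<open>Suc j \<le> m\<close> by (simp add: V_def)
  finally show False by simp
qed

lemma egal_run_twice_lower_bound:
  assumes nonpos: "\<forall>j\<in>{1..m}. v j \<le> 0"
    and sorted: "\<forall>j\<in>{1..m}. \<forall>j'\<in>{1..m}. j \<le> j' \<longrightarrow> v j \<le> v j'"
    and pos: "\<forall>k\<in>{1..n}. 0 < s k"
    and f: "f \<in> {1..m} \<rightarrow>\<^sub>E {1..n}"
    and lam: "\<forall>k\<in>{1..n}. lam * s k \<le> V v (bundle_of m f k)"
    and run: "egal_run n v s t X" and "t \<le> m"
  shows "\<forall>k\<in>{1..n}. 2 * lam * s k \<le> V v (X k)"
  using run \<open>t \<le> m\<close>
proof induction
  case start
  have "2 * lam * s k \<le> 0" if "k \<in> {1..n}" for k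
  proof -
    have "lam * s k \<le> 0"
      using lam that V_nonpos[OF _ nonpos, of "bundle_of m f k"] by force
    then show ?thesis
      by linarith
  qed
  then show ?case
    by (simp add: V_def)
next
  case (step j X i)
  obtain k where k: "k \<in> {1..n}" "lam * s k \<le> v (Suc j)" "lam * s k \<le> V v (X k)"
    using egal_run_exists_slack[OF nonpos sorted f lam step.hyps(1) step.prems] by blast
  have new: "V v (insert (Suc j) (X k)) = V v (X k) + v (Suc j)"
    using egal_run_subset[OF step.hyps(1), of k]
    by (intro V_insert_new) (auto intro: finite_subset)
  have "2 * lam \<le> V v (X k \<union> {Suc j}) / s k"
    using k pos new by (simp add: field_simps)
  also have "\<dots> \<le> V v (X i \<union> {Suc j}) / s i"
    using step.hyps(3) k(1) by blast
  finally have "2 * lam * s i \<le> V v (X i \<union> {Suc j})"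
    using pos step.hyps(2) by (simp add: field_simps)
  then show ?case
    using step.IH step.prems by auto
qed

lemma WMMS_witness:
  assumes "n \<ge> 1" "i \<in> {1..n}" and pos: "\<forall>k\<in>{1..n}. 0 < s k"
  obtains f lam where "f \<in> {1..m} \<rightarrow>\<^sub>E {1..n}" "WMMS n m v s i = lam * s i"
    "\<forall>k\<in>{1..n}. lam * s k \<le> V v (bundle_of m f k)"
proof -
  define F where "F f = Min ((\<lambda>k. V v (bundle_of m f k) * s i / s k) ` {1..n})" for f
  have "(\<lambda>j\<in>{1..m}. 1) \<in> {1..m} \<rightarrow>\<^sub>E {1..n}"
    using \<open>n \<ge> 1\<close> by auto
  then have "{1..m} \<rightarrow>\<^sub>E {1..n} \<noteq> {}"
    by blast
  then have "WMMS n m v s i \<in> F ` ({1..m} \<rightarrow>\<^sub>E {1..n})"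
    unfolding WMMS_def F_def by (intro Max_in finite_imageI finite_PiE) auto
  then obtain f where f: "f \<in> {1..m} \<rightarrow>\<^sub>E {1..n}" and W: "WMMS n m v s i = F f"
    by blast
  have "F f \<in> (\<lambda>k. V v (bundle_of m f k) * s i / s k) ` {1..n}"
    unfolding F_def using \<open>n \<ge> 1\<close> by (intro Min_in) auto
  then obtain k0 where k0: "k0 \<in> {1..n}" and F: "F f = V v (bundle_of m f k0) * s i / s k0"
    by blast
  define lam where "lam = V v (bundle_of m f k0) / s k0"
  have "lam * s k \<le> V v (bundle_of m f k)" if k: "k \<in> {1..n}" for k
  proof -
    have "V v (bundle_of m f k0) * s i / s k0 \<le> V v (bundle_of m f k) * s i / s k"
      using k unfolding F[symmetric] F_def by (intro Min_le) auto
    then show ?thesis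
      using pos k k0 \<open>i \<in> {1..n}\<close> unfolding lam_def by (simp add: field_simps)
  qed
  moreover have "WMMS n m v s i = lam * s i"
    unfolding W F lam_def by simp
  ultimately show ?thesis
    using that f by blast
qed

theorem lemma4:
  fixes n m :: nat and v s :: "nat \<Rightarrow> real" and X :: "nat \<Rightarrow> nat set"
  assumes "n \<ge> 1"
    and nonpos: "\<forall>j\<in>{1..m}. v j \<le> 0"
    and total: "V v {1..m} = -1"
    and sorted: "\<forall>j\<in>{1..m}. \<forall>j'\<in>{1..m}. j \<le> j' \<longrightarrow> v j \<le> v j'"
    and shares: "\<forall>i\<in>{1..n}. 0 < s i \<and> s i \<le> 1"
    and sum_shares: "(\<Sum>i\<in>{1..n}. s i) = 1"
    and run: "egal_run n v s m X"
  shows "\<forall>i\<in>{1..n}. V v (X i) \<ge> 2 * WMMS n m v s i"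
proof
  fix i assume i: "i \<in> {1..n}"
  have pos: "\<forall>k\<in>{1..n}. 0 < s k"
    using shares by blast
  obtain f lam where f: "f \<in> {1..m} \<rightarrow>\<^sub>E {1..n}" and W: "WMMS n m v s i = lam * s i"
    and lam: "\<forall>k\<in>{1..n}. lam * s k \<le> V v (bundle_of m f k)"
    using WMMS_witness[OF \<open>n \<ge> 1\<close> i pos] .
  have "2 * lam * s i \<le> V v (X i)"
    using egal_run_twice_lower_bound[OF nonpos sorted pos f lam run order.refl] i by blast
  then show "V v (X i) \<ge> 2 * WMMS n m v s i"
    using W by simp
qed

end
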